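(* Let $M\ge 2$ be even, $T\ge1$, $\mathcal{X}=\{\pm1,\pm3,\ldots,\pm(M-1)\}\subset\mathbb{R}$ and $\mathcal{C}=\mathcal{X}^T$. Let $\mathbf{y}\in\mathbb{C}^T$, $\mathbf{y}\neq\mathbf 0$. Let $\mathbf{x}^{\mathrm{opt}}$ be any maximizer of $|\hat{\mathbf{x}}^\dagger\mathbf{y}|^2/\|\hat{\mathbf{x}}\|^2$ over $\hat{\mathbf{x}}\in\mathcal{C}$, let $h^{\mathrm{opt}}=(\mathbf{x}^{\mathrm{opt}})^\dagger\mathbf{y}/\|\mathbf{x}^{\mathrm{opt}}\|^2$ and $\lambda^{\mathrm{opt}}=1/h^{\mathrm{opt}}$. Then $|\mathrm{Re}(\lambda^{\mathrm{opt}}y_t)|\le M+T-2$ for all $t=1,\ldots,T$.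
   Context: $(\cdot)^\dagger$ is the Hermitian transpose and $\|\cdot\|$ the Euclidean norm. This is noncoherent GLRT detection of real $M$-ary PAM codewords of length $T$ transmitted over a complex-valued block fading channel $\mathbf{y}=h\mathbf{x}+\mathbf{n}$; since $\mathbf{y}\neq\mathbf 0$ the maximum is positive so $h^{\mathrm{opt}}\ne0$. *)

theory Defs
  imports "HOL-Analysis.Analysis"
begin

definition pam :: "nat \<Rightarrow> real set" where
  "pam M = {a. \<exists>k::nat. 1 \<le> k \<and> k \<le> M div 2 \<and> (a = 2 * real k - 1 \<or> a = -(2 * real k - 1))}"

text \<open>Codebook X^T: length-T vectors, indices 0..T-1, entries beyond T fixed to 0.\<close>
definition codebook :: "nat \<Rightarrow> nat \<Rightarrow> (nat \<Rightarrow> real) set" where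
  "codebook M T = {x. (\<forall>t<T. x t \<in> pam M) \<and> (\<forall>t\<ge>T. x t = 0)}"

text \<open>Hermitian inner product x^dagger y for real x and complex y.\<close>
definition hinner :: "nat \<Rightarrow> (nat \<Rightarrow> real) \<Rightarrow> (nat \<Rightarrow> complex) \<Rightarrow> complex" where
  "hinner T x y = (\<Sum>t<T. complex_of_real (x t) * y t)"

definition sqnorm :: "nat \<Rightarrow> (nat \<Rightarrow> real) \<Rightarrow> real" where
  "sqnorm T x = (\<Sum>t<T. (x t)\<^sup>2)"

definition glrt_metric :: "nat \<Rightarrow> (nat \<Rightarrow> real) \<Rightarrow> (nat \<Rightarrow> complex) \<Rightarrow> real" where
  "glrt_metric T x y = (cmod (hinner T x y))\<^sup>2 / sqnorm T x"

end

theory Submission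
  imports Defs
begin

(* Let N = ||x||^2 for the maximiser x = xopt, H = x^dagger y, lambda = N / H and
   r_s = Re (lambda y_s).  Optimality of x together with Re z <= |z| gives the correlation bound
   (sum_s x'_s r_s)^2 <= N ||x'||^2 for every codeword x', with equality sum_s x_s r_s = N at x'= x.
   Testing it on the codewords obtained from x by moving a single coordinate one PAM level up or
   down yields "step consistency": r_s <= x_s + 1 whenever x_s + 2 is a PAM symbol, and
   x_s - 1 <= r_s whenever x_s - 2 is one.  For a PAM symbol a this implies the slack
   a r - a^2 + |a| >= 0 coordinatewise; summing, the slacks add up to sum |x_s| <= T (M - 1), so
   each single slack is at most T (M - 1).  At an interior level step consistency bounds r_t
   directly, at the extreme levels +-(M-1) the slack bound does. *)

lemma pam_abs_bounds:
  assumes "a \<in> pam M"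
  shows "1 \<le> \<bar>a\<bar>" "\<bar>a\<bar> \<le> real M - 1"
proof -
  obtain k :: nat where k: "1 \<le> k" "2 * k \<le> M" "a = 2 * real k - 1 \<or> a = -(2 * real k - 1)"
    using assms unfolding pam_def by fastforce
  have "2 * real k \<le> real M" using k(2) by linarith
  with k(1,3) show "1 \<le> \<bar>a\<bar>" "\<bar>a\<bar> \<le> real M - 1" by auto
qed

lemma pam_uminus: "a \<in> pam M \<Longrightarrow> -a \<in> pam M"
  unfolding pam_def by auto

lemma pam_step_up:
  assumes "a \<in> pam M" "even M"
  shows "a = real M - 1 \<or> a + 2 \<in> pam M"
proof -
  obtain k :: nat where k: "1 \<le> k" "k \<le> M div 2" "a = 2 * real k - 1 \<or> a = -(2 * real k - 1)"
    using assms(1) unfolding pam_def by blast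
  have M_half: "real M = 2 * real (M div 2)" using assms(2) by (metis even_two_times_div_two of_nat_mult of_nat_numeral)
  show ?thesis
  proof (cases "a = 2 * real k - 1")
    case pos: True
    show ?thesis
    proof (cases "k < M div 2")
      case True
      have "a + 2 = 2 * real (k + 1) - 1" using pos by simp
      with True show ?thesis unfolding pam_def by (intro disjI2 CollectI exI[of _ "k + 1"]) auto
    next
      case False
      with k(2) M_half pos show ?thesis by simp
    qed
  next
    case False
    hence neg: "a = -(2 * real k - 1)" using k(3) by simp
    show ?thesis
    proof (cases "k = 1")
      case True
      have "a + 2 = 2 * real (1::nat) - 1" using neg True by simp
      with k True show ?thesis unfolding pam_def by (intro disjI2 CollectI exI[of _ "1::nat"]) auto
    next
      case False
      have "a + 2 = -(2 * real (k - 1) - 1)" using neg False k(1) by (simp add: of_nat_diff)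
      with False k show ?thesis unfolding pam_def by (intro disjI2 CollectI exI[of _ "k - 1"]) auto
    qed
  qed
qed

lemma pam_step_down:
  assumes "a \<in> pam M" "even M"
  shows "a = -(real M - 1) \<or> a - 2 \<in> pam M"
  using pam_step_up[OF pam_uminus[OF assms(1)] assms(2)] pam_uminus[of "-a + 2" M] by auto

text \<open>A vector \<open>r\<close> is step consistent with the symbol vector \<open>x\<close> if each \<open>r\<^sub>s\<close> lies
  between the midpoints from \<open>x\<^sub>s\<close> to its neighbouring PAM levels (where these exist), i.e.
  \<open>x\<^sub>s\<close> is a nearest symbol to \<open>r\<^sub>s\<close> among its neighbours.\<close>
definition step_consistent :: "nat \<Rightarrow> nat \<Rightarrow> (nat \<Rightarrow> real) \<Rightarrow> (nat \<Rightarrow> real) \<Rightarrow> bool" where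
  "step_consistent M T x r \<longleftrightarrow>
     (\<forall>s<T. (x s + 2 \<in> pam M \<longrightarrow> r s \<le> x s + 1) \<and> (x s - 2 \<in> pam M \<longrightarrow> x s - 1 \<le> r s))"

text \<open>For a single symbol, step consistency makes the slack \<open>a r - a\<^sup>2 + \<bar>a\<bar>\<close> nonnegative:
  a positive symbol has a lower neighbour, a negative one an upper neighbour.\<close>
lemma slack_nonneg:
  assumes "a \<in> pam M" "even M" "M \<ge> 2"
    and up: "a + 2 \<in> pam M \<Longrightarrow> r \<le> a + 1"
    and down: "a - 2 \<in> pam M \<Longrightarrow> a - 1 \<le> r"
  shows "0 \<le> a * r - a\<^sup>2 + \<bar>a\<bar>"
proof (cases "a > 0")
  case True
  have "a - 1 \<le> r" using down pam_step_down[OF assms(1,2)] True assms(3) by force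
  hence "a * (a - 1) \<le> a * r" using True by (simp add: mult_left_mono)
  thus ?thesis using True by (simp add: power2_eq_square algebra_simps)
next
  case False
  hence neg: "a < 0" using pam_abs_bounds(1)[OF assms(1)] by auto
  have "r \<le> a + 1" using up pam_step_up[OF assms(1,2)] neg assms(3) by force
  hence "a * (a + 1) \<le> a * r" using neg by (simp add: mult_left_mono_neg)
  thus ?thesis using neg by (simp add: power2_eq_square algebra_simps)
qed

text \<open>A slack bounded by \<open>T (M - 1)\<close> together with step consistency bounds \<open>\<bar>r\<bar>\<close>:
  at an interior level by the neighbour condition, at the extreme levels by the slack itself.\<close>
lemma coordinate_bound:
  assumes "a \<in> pam M" "even M" "M \<ge> 2" "T \<ge> 1"
    and up: "a + 2 \<in> pam M \<Longrightarrow> r \<le> a + 1"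
    and down: "a - 2 \<in> pam M \<Longrightarrow> a - 1 \<le> r"
    and slack: "a * r - a\<^sup>2 + \<bar>a\<bar> \<le> real T * (real M - 1)"
  shows "\<bar>r\<bar> \<le> real M + real T - 2"
proof -
  have M1: "real M - 1 > 0" using assms(3) by simp
  have T1: "real T \<ge> 1" using assms(4) by simp
  have "r \<le> real M + real T - 2"
    using pam_step_up[OF assms(1,2)]
  proof
    assume "a = real M - 1"
    hence "(real M - 1) * r - (real M - 1)\<^sup>2 + (real M - 1) \<le> real T * (real M - 1)"
      using slack M1 by simp
    hence "(real M - 1) * r \<le> (real M - 1) * (real M + real T - 2)"
      by (simp add: power2_eq_square algebra_simps)
    thus ?thesis using M1 by simp
  next
    assume "a + 2 \<in> pam M"
    thus ?thesis using up pam_abs_bounds(2)[of "a + 2" M] T1 by force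
  qed
  moreover have "-(real M + real T - 2) \<le> r"
    using pam_step_down[OF assms(1,2)]
  proof
    assume bottom: "a = -(real M - 1)"
    have "(real M - 1) * (- r) - (real M - 1)\<^sup>2 + (real M - 1) \<le> real T * (real M - 1)"
      using slack unfolding bottom by (simp add: power2_commute[of 1] algebra_simps)
    hence "(real M - 1) * (- r) \<le> (real M - 1) * (real M + real T - 2)"
      by (simp add: power2_eq_square algebra_simps)
    hence "- r \<le> real M + real T - 2" using M1 by (simp only: mult_le_cancel_left_pos)
    thus ?thesis by linarith
  next
    assume "a - 2 \<in> pam M"
    thus ?thesis using down pam_abs_bounds(2)[of "a - 2" M] T1 by force
  qed
  ultimately show ?thesis by linarith
qed

text \<open>The combinatorial core: if \<open>r\<close> is step consistent with a codeword \<open>x\<close> and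
  \<open>\<Sum> x\<^sub>s r\<^sub>s = \<parallel>x\<parallel>\<^sup>2\<close>, the slacks sum to \<open>\<Sum> \<bar>x\<^sub>s\<bar> \<le> T (M - 1)\<close>; being
  nonnegative, each is at most that, and every \<open>\<bar>r\<^sub>t\<bar>\<close> is bounded.\<close>
lemma step_consistent_bound:
  assumes "even M" "M \<ge> 2" "T \<ge> 1" "x \<in> codebook M T"
    and cons: "step_consistent M T x r"
    and corr: "(\<Sum>s<T. x s * r s) = sqnorm T x"
    and "t < T"
  shows "\<bar>r t\<bar> \<le> real M + real T - 2"
proof -
  have x_pam: "x s \<in> pam M" if "s < T" for s using assms(4) that unfolding codebook_def by blast
  define slack where "slack s = x s * r s - (x s)\<^sup>2 + \<bar>x s\<bar>" for s
  have slack_ge: "0 \<le> slack s" if "s < T" for s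
    unfolding slack_def using slack_nonneg[OF x_pam[OF that] assms(1,2)] cons that
    unfolding step_consistent_def by blast
  have "(\<Sum>s<T. slack s) = (\<Sum>s<T. \<bar>x s\<bar>)"
    using corr unfolding slack_def sqnorm_def by (simp add: sum.distrib sum_subtractf)
  also have "\<dots> \<le> (\<Sum>s<T. real M - 1)"
    by (rule sum_mono) (use pam_abs_bounds(2) x_pam in blast)
  finally have "(\<Sum>s<T. slack s) \<le> real T * (real M - 1)" by simp
  moreover have "slack t \<le> (\<Sum>s<T. slack s)"
    by (rule member_le_sum) (use slack_ge \<open>t < T\<close> in auto)
  ultimately show ?thesis
    using coordinate_bound[OF x_pam[OF \<open>t < T\<close>] assms(1-3)] cons \<open>t < T\<close>
    unfolding slack_def step_consistent_def by fastforce
qed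

lemma sqnorm_pos:
  assumes "x \<in> codebook M T" "T \<ge> 1"
  shows "0 < sqnorm T x"
proof -
  have "1 \<le> \<bar>x 0\<bar>" using assms pam_abs_bounds(1) unfolding codebook_def by auto
  hence "0 < (x 0)\<^sup>2" by simp
  also have "(x 0)\<^sup>2 \<le> sqnorm T x"
    unfolding sqnorm_def by (rule member_le_sum) (use assms(2) in auto)
  finally show ?thesis .
qed

lemma sum_fun_upd_mult:
  fixes x r :: "nat \<Rightarrow> real"
  assumes "s < T"
  shows "(\<Sum>u<T. (x(s := v)) u * r u) = (\<Sum>u<T. x u * r u) + (v - x s) * r s"
proof -
  have "(\<Sum>u<T. (x(s := v)) u * r u) = (\<Sum>u<T. x u * r u + (if u = s then (v - x s) * r s else 0))"
    by (rule sum.cong) (auto simp: algebra_simps)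
  also have "\<dots> = (\<Sum>u<T. x u * r u) + (\<Sum>u<T. if u = s then (v - x s) * r s else 0)"
    by (rule sum.distrib)
  also have "(\<Sum>u<T. if u = s then (v - x s) * r s else 0) = (v - x s) * r s"
    using assms by simp
  finally show ?thesis .
qed

lemma sqnorm_fun_upd:
  assumes "s < T"
  shows "sqnorm T (x(s := v)) = sqnorm T x + v\<^sup>2 - (x s)\<^sup>2"
  using sum_fun_upd_mult[OF assms, of x v "x(s := v)"] sum_fun_upd_mult[OF assms, of x v x]
  unfolding sqnorm_def by (simp add: power2_eq_square mult.commute algebra_simps)

lemma Re_scaled_hinner: "Re (c * hinner T x y) = (\<Sum>s<T. x s * Re (c * y s))"
  unfolding hinner_def by (simp add: sum_distrib_left Re_sum algebra_simps)

text \<open>Optimality of \<open>xopt\<close> as a correlation bound: with \<open>\<lambda> = N / H\<close>, every codeword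
  satisfies \<open>(\<Sum> x\<^sub>s Re(\<lambda> y\<^sub>s))\<^sup>2 \<le> N \<parallel>x\<parallel>\<^sup>2\<close>, since \<open>\<bar>Re z\<bar> \<le> \<bar>z\<bar>\<close>.\<close>
lemma glrt_correlation_bound:
  assumes "T \<ge> 1" "xopt \<in> codebook M T" "x \<in> codebook M T"
    and opt: "glrt_metric T x y \<le> glrt_metric T xopt y"
    and H: "hinner T xopt y \<noteq> 0"
  defines "lam \<equiv> complex_of_real (sqnorm T xopt) / hinner T xopt y"
  shows "(\<Sum>s<T. x s * Re (lam * y s))\<^sup>2 \<le> sqnorm T xopt * sqnorm T x"
proof -
  define N where "N = sqnorm T xopt"
  define G where "G = cmod (hinner T xopt y)"
  have N: "0 < N" "0 < sqnorm T x" using sqnorm_pos assms(1-3) unfolding N_def by blast+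
  have G: "0 < G" using H unfolding G_def by simp
  have "(cmod (hinner T x y))\<^sup>2 * N \<le> G\<^sup>2 * sqnorm T x"
    using opt N unfolding glrt_metric_def G_def N_def by (simp add: field_simps)
  hence metric: "(N / G)\<^sup>2 * (cmod (hinner T x y))\<^sup>2 \<le> N * sqnorm T x"
    using N G by (simp add: field_simps power2_eq_square)
  have "(\<Sum>s<T. x s * Re (lam * y s))\<^sup>2 = (Re (lam * hinner T x y))\<^sup>2"
    by (simp only: Re_scaled_hinner)
  also have "\<dots> \<le> (cmod (lam * hinner T x y))\<^sup>2"
    using power_mono[OF abs_Re_le_cmod abs_ge_zero, of "lam * hinner T x y" 2]
    by (simp only: power2_abs)
  also have "\<dots> = (N / G)\<^sup>2 * (cmod (hinner T x y))\<^sup>2"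
    using N unfolding lam_def N_def G_def by (simp add: norm_mult norm_divide power_mult_distrib power_divide)
  also have "\<dots> \<le> N * sqnorm T x" by (rule metric)
  finally show ?thesis unfolding N_def .
qed

text \<open>If \<open>(N + c r)\<^sup>2 \<le> N (N + (a + c)\<^sup>2 - a\<^sup>2)\<close>, then \<open>c r \<le> c a + c\<^sup>2 / 2\<close>: the
  algebra behind a single-coordinate move by \<open>c\<close>.\<close>
lemma move_inequality:
  fixes N c r a :: real
  assumes "0 < N" "(N + c * r)\<^sup>2 \<le> N * (N + (a + c)\<^sup>2 - a\<^sup>2)"
  shows "c * r \<le> c * a + c\<^sup>2 / 2"
proof -
  have "2 * (N * (c * r)) + (c * r)\<^sup>2 \<le> 2 * (N * (c * a + c\<^sup>2 / 2))"
    using assms(2) by (simp add: power2_eq_square algebra_simps)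
  moreover have "0 \<le> (c * r)\<^sup>2" by simp
  ultimately have "N * (c * r) \<le> N * (c * a + c\<^sup>2 / 2)"
    by linarith
  thus ?thesis using assms(1) by simp
qed

text \<open>Testing optimality on single-coordinate moves of \<open>xopt\<close> by \<open>\<plusminus>2\<close> shows that the
  projection coefficients \<open>Re(\<lambda> y\<^sub>s)\<close> are step consistent with \<open>xopt\<close>.\<close>
lemma glrt_step_consistent:
  assumes "T \<ge> 1" "xopt \<in> codebook M T"
    and opt: "\<forall>x\<in>codebook M T. glrt_metric T x y \<le> glrt_metric T xopt y"
    and H: "hinner T xopt y \<noteq> 0"
  defines "r \<equiv> \<lambda>s. Re (complex_of_real (sqnorm T xopt) / hinner T xopt y * y s)"
  shows "step_consistent M T xopt r" "(\<Sum>s<T. xopt s * r s) = sqnorm T xopt"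
proof -
  define N where "N = sqnorm T xopt"
  have N: "0 < N" using sqnorm_pos assms(1,2) unfolding N_def by blast
  have bound: "(\<Sum>s<T. x s * r s)\<^sup>2 \<le> N * sqnorm T x" if "x \<in> codebook M T" for x
  proof -
    have "glrt_metric T x y \<le> glrt_metric T xopt y" using opt that by blast
    from glrt_correlation_bound[OF assms(1,2) that this H] show ?thesis unfolding r_def N_def .
  qed
  have "(\<Sum>s<T. xopt s * r s) = Re (complex_of_real N / hinner T xopt y * hinner T xopt y)"
    unfolding r_def N_def Re_scaled_hinner ..
  hence corr: "(\<Sum>s<T. xopt s * r s) = N" using H by simp
  then show "(\<Sum>s<T. xopt s * r s) = sqnorm T xopt" unfolding N_def .
  have move: "c * r s \<le> c * xopt s + c\<^sup>2 / 2" if "s < T" "xopt s + c \<in> pam M" for s c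
  proof (rule move_inequality[OF N])
    have moved: "xopt(s := xopt s + c) \<in> codebook M T"
      using assms(2) that unfolding codebook_def by auto
    have corr_moved: "(\<Sum>u<T. (xopt(s := xopt s + c)) u * r u) = N + c * r s"
      using sum_fun_upd_mult[OF that(1), of xopt "xopt s + c" r] corr by simp
    have sqnorm_moved: "sqnorm T (xopt(s := xopt s + c)) = N + (xopt s + c)\<^sup>2 - (xopt s)\<^sup>2"
      using sqnorm_fun_upd[OF that(1), of xopt] unfolding N_def .
    show "(N + c * r s)\<^sup>2 \<le> N * (N + (xopt s + c)\<^sup>2 - (xopt s)\<^sup>2)"
      using bound[OF moved] unfolding corr_moved sqnorm_moved .
  qed
  have "r s \<le> xopt s + 1" if "s < T" "xopt s + 2 \<in> pam M" for s
    using move[OF that] by simp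
  moreover have "xopt s - 1 \<le> r s" if "s < T" "xopt s - 2 \<in> pam M" for s
    using move[of s "-2"] that by simp
  ultimately show "step_consistent M T xopt r"
    unfolding step_consistent_def by blast
qed

theorem mainTheorem4:
  fixes M T :: nat and y :: "nat \<Rightarrow> complex" and xopt :: "nat \<Rightarrow> real"
  assumes "M \<ge> 2" and "even M" and "T \<ge> 1"
    and "\<exists>t<T. y t \<noteq> 0"
    and "xopt \<in> codebook M T"
    and "\<forall>x\<in>codebook M T. glrt_metric T x y \<le> glrt_metric T xopt y"
  shows "\<forall>t<T. \<bar>Re ((1 / (hinner T xopt y / complex_of_real (sqnorm T xopt))) * y t)\<bar>
           \<le> real M + real T - 2"
proof (intro allI impI)
  fix t assume "t < T"
  show "\<bar>Re ((1 / (hinner T xopt y / complex_of_real (sqnorm T xopt))) * y t)\<bar> \<le> real M + real T - 2"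
  proof (cases "hinner T xopt y = 0")
    case True
    thus ?thesis using assms(1,3) by simp
  next
    case False
    from glrt_step_consistent[OF assms(3,5,6) False]
      step_consistent_bound[OF assms(2,1,3,5) _ _ \<open>t < T\<close>]
    show ?thesis by simp
  qed
qed

end
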